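(* Let $R,\mu$ be positive integers with $\mu<R$. (i) For all elements $\lambda$ of an orbit under $G_{R,\mu}$, the values $\mathrm P^+_{R,\mu}(\lambda)$ are identical; the same holds for any orbit under $G^\oplus_{R,\mu}$. (ii) If $\mathbb Z_R$ is a single orbit under $G_{R,\mu}$, then $\mathrm P^+_{R,\mu}(\lambda)=\frac1\mu\binom{R-1}{\mu-1}$ for all $\lambda\in\mathbb Z_R$.
   Context: $\mathbb Z_R$ is the ring of integers modulo $R$, $\mathbb Z_R^*$ its group of units. $\mathrm P^+_{R,\mu}(\lambda)$ is the number of $\mu$-element subsets of $\mathbb Z_R$ whose elements sum to $\lambda$ in $\mathbb Z_R$. $G_{R,\mu}$ is the group of maps $\lambda\mapsto\lambda\ell+u\mu$ on $\mathbb Z_R$ with $\ell\in\mathbb Z_R^*$, $u\in\{0,\dots,R-1\}$; $G^\oplus_{R,\mu}$ is its subgroup with $\ell=1$. An orbit is an equivalence class of $\mathbb Z_R$ under "$\lambda_2=\lambda_1\varphi$ for some $\varphi$ in the group". *)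

theory Defs
  imports Complex_Main
begin

text \<open>Z_R is represented by the residues {0..<R} of nat, with arithmetic mod R.\<close>

definition Pplus :: "nat \<Rightarrow> nat \<Rightarrow> nat \<Rightarrow> nat" where
  "Pplus R mu l = card {S. S \<subseteq> {0..<R} \<and> card S = mu \<and> (\<Sum>S) mod R = l mod R}"

definition Gaff :: "nat \<Rightarrow> nat \<Rightarrow> (nat \<Rightarrow> nat) set" where
  "Gaff R mu = {\<phi>. \<exists>ell u. ell < R \<and> coprime ell R \<and> u < R \<and>
                       \<phi> = (\<lambda>x. (x * ell + u * mu) mod R)}"

definition Gplus :: "nat \<Rightarrow> nat \<Rightarrow> (nat \<Rightarrow> nat) set" where
  "Gplus R mu = {\<phi>. \<exists>u. u < R \<and> \<phi> = (\<lambda>x. (x + u * mu) mod R)}"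

definition same_orbit :: "(nat \<Rightarrow> nat) set \<Rightarrow> nat \<Rightarrow> nat \<Rightarrow> bool" where
  "same_orbit G l1 l2 \<longleftrightarrow> (\<exists>\<phi>\<in>G. l2 = \<phi> l1)"

end

theory Submission
  imports Defs "HOL-Number_Theory.Number_Theory"
begin

text \<open>An affine map x \<mapsto> x \<ell> + v with \<ell> a unit permutes Z_R, so it permutes the
  \<mu>-element subsets of Z_R, multiplying their sums by \<ell> and shifting them by \<mu> v. If there is a single orbit, the R values
  P+(\<lambda>) are equal and add up to the number of \<mu>-subsets, so each equals
  (R choose \<mu>) / R = (R-1 choose \<mu>-1) / \<mu>.\<close>

lemma bij_betw_affine_mod:
  fixes R ell v :: nat
  assumes "0 < R" and "coprime ell R"
  shows "bij_betw (\<lambda>x. (x * ell + v) mod R) {0..<R} {0..<R}"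
proof -
  have "inj_on (\<lambda>x. (x * ell + v) mod R) {0..<R}"
  proof
    fix x y assume "x \<in> {0..<R}" "y \<in> {0..<R}" "(x * ell + v) mod R = (y * ell + v) mod R"
    then have "[x * ell + v = y * ell + v] (mod R)" and "x < R" "y < R"
      by (simp_all add: cong_def)
    then show "x = y"
      using cong_add_rcancel_nat cong_mult_rcancel_nat[OF \<open>coprime ell R\<close>]
      by (simp add: cong_def)
  qed
  moreover have "(\<lambda>x. (x * ell + v) mod R) ` {0..<R} \<subseteq> {0..<R}"
    using \<open>0 < R\<close> by auto
  ultimately show ?thesis
    by (simp add: bij_betw_def endo_inj_surj)
qed

lemma sum_image_affine_mod_cong:
  fixes R ell v :: nat and S :: "nat set"
  assumes "inj_on (\<lambda>x. (x * ell + v) mod R) S"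
  shows "[\<Sum>((\<lambda>x. (x * ell + v) mod R) ` S) = \<Sum>S * ell + card S * v] (mod R)"
proof -
  have "\<Sum>((\<lambda>x. (x * ell + v) mod R) ` S) = (\<Sum>x\<in>S. (x * ell + v) mod R)"
    using assms by (simp add: sum.reindex)
  also have "[\<dots> = (\<Sum>x\<in>S. x * ell + v)] (mod R)"
    by (simp add: cong_def mod_sum_eq)
  also have "(\<Sum>x\<in>S. x * ell + v) = \<Sum>S * ell + card S * v"
    by (simp add: sum.distrib sum_distrib_right)
  finally show ?thesis .
qed

lemma Pplus_eq_card_Pow:
  "Pplus R mu l = card {S \<in> Pow {0..<R}. card S = mu \<and> [\<Sum>S = l] (mod R)}"
  by (simp add: Pplus_def cong_def)

lemma Pplus_affine:
  fixes R mu ell u l :: nat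
  assumes "0 < R" and "coprime ell R"
  shows "Pplus R mu ((l * ell + u * mu) mod R) = Pplus R mu l"
proof -
  define f where "f x = (x * ell + u) mod R" for x
  have bij: "bij_betw f {0..<R} {0..<R}"
    unfolding f_def using assms by (rule bij_betw_affine_mod)
  have "card (f ` S) = mu \<and> [\<Sum>(f ` S) = (l * ell + u * mu) mod R] (mod R)
          \<longleftrightarrow> card S = mu \<and> [\<Sum>S = l] (mod R)"
    if "S \<in> Pow {0..<R}" for S
  proof -
    have inj: "inj_on f S"
      using that bij_betw_imp_inj_on[OF bij] inj_on_subset by blast
    then have "[\<Sum>(f ` S) = \<Sum>S * ell + card S * u] (mod R)"
      unfolding f_def by (rule sum_image_affine_mod_cong)
    moreover have "[\<Sum>S * ell + mu * u = l * ell + mu * u] (mod R) \<longleftrightarrow> [\<Sum>S = l] (mod R)"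
      using cong_mult_rcancel_nat[OF \<open>coprime ell R\<close>] cong_add_rcancel_nat by blast
    ultimately show ?thesis
      using card_image[OF inj]
      by (auto simp: cong_def mult.commute)
  qed
  then have "bij_betw ((`) f)
      {S \<in> Pow {0..<R}. card S = mu \<and> [\<Sum>S = l] (mod R)}
      {T \<in> Pow {0..<R}. card T = mu \<and> [\<Sum>T = (l * ell + u * mu) mod R] (mod R)}"
    by (intro bij_betw_Collect bij_betw_image_Pow bij)
  then show ?thesis
    unfolding Pplus_eq_card_Pow by (simp add: bij_betw_same_card)
qed

lemma Pplus_same_orbit_Gaff:
  assumes "0 < R" and "same_orbit (Gaff R mu) l1 l2"
  shows "Pplus R mu l1 = Pplus R mu l2"
  using assms Pplus_affine unfolding same_orbit_def Gaff_def by auto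

lemma Gplus_subset_Gaff: "1 < R \<Longrightarrow> Gplus R mu \<subseteq> Gaff R mu"
  unfolding Gplus_def Gaff_def by force

lemma same_orbit_mono: "G \<subseteq> H \<Longrightarrow> same_orbit G l1 l2 \<Longrightarrow> same_orbit H l1 l2"
  unfolding same_orbit_def by blast

lemma sum_Pplus:
  assumes "0 < R"
  shows "(\<Sum>l<R. Pplus R mu l) = R choose mu"
proof -
  define A where "A l = {S. S \<subseteq> {0..<R} \<and> card S = mu \<and> (\<Sum>S) mod R = l mod R}" for l
  have "{S. S \<subseteq> {0..<R} \<and> card S = mu} = (\<Union>l<R. A l)"
    using assms by (auto simp: A_def)
  moreover have "card (\<Union>l<R. A l) = (\<Sum>l<R. card (A l))"
    by (rule card_UN_disjoint) (auto simp: A_def intro: finite_subset[of _ "Pow {0..<R}"])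
  ultimately show ?thesis
    using n_subsets[of "{0..<R}" mu] by (simp add: Pplus_def A_def)
qed

lemma Pplus_constant_value:
  assumes "0 < R" and "0 < mu" and "\<And>l. l < R \<Longrightarrow> Pplus R mu l = c"
  shows "mu * c = (R - 1) choose (mu - 1)"
proof -
  have "R * c = R choose mu"
    using sum_Pplus[OF \<open>0 < R\<close>, of mu] assms(3) by simp
  moreover have "mu * (R choose mu) = R * ((R - 1) choose (mu - 1))"
    using binomial_absorption[of "mu - 1" R] \<open>0 < mu\<close> by simp
  ultimately have "R * (mu * c) = R * ((R - 1) choose (mu - 1))"
    by (metis mult.left_commute)
  then show ?thesis
    using \<open>0 < R\<close> by simp
qed

theorem theorem4p6:
  fixes R mu :: nat
  assumes "0 < mu" and "mu < R"
  shows "(\<forall>l1 l2. l1 < R \<longrightarrow> l2 < R \<longrightarrow> same_orbit (Gaff R mu) l1 l2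
            \<longrightarrow> Pplus R mu l1 = Pplus R mu l2)
       \<and> (\<forall>l1 l2. l1 < R \<longrightarrow> l2 < R \<longrightarrow> same_orbit (Gplus R mu) l1 l2
            \<longrightarrow> Pplus R mu l1 = Pplus R mu l2)
       \<and> ((\<forall>l1 l2. l1 < R \<longrightarrow> l2 < R \<longrightarrow> same_orbit (Gaff R mu) l1 l2)
            \<longrightarrow> (\<forall>l < R. real (Pplus R mu l) = real ((R - 1) choose (mu - 1)) / real mu))"
proof -
  have "0 < R" and "1 < R"
    using assms by simp_all
  have transitive: "real (Pplus R mu l) = real ((R - 1) choose (mu - 1)) / real mu"
    if single_orbit: "\<forall>l1 l2. l1 < R \<longrightarrow> l2 < R \<longrightarrow> same_orbit (Gaff R mu) l1 l2"
      and "l < R" for l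
  proof -
    have "Pplus R mu k = Pplus R mu l" if "k < R" for k
      using single_orbit \<open>l < R\<close> that Pplus_same_orbit_Gaff[OF \<open>0 < R\<close>] by blast
    then have "mu * Pplus R mu l = (R - 1) choose (mu - 1)"
      by (rule Pplus_constant_value[OF \<open>0 < R\<close> \<open>0 < mu\<close>])
    then show ?thesis
      using \<open>0 < mu\<close> by (simp add: field_simps flip: of_nat_mult)
  qed
  show ?thesis
    using Pplus_same_orbit_Gaff[OF \<open>0 < R\<close>] transitive
      same_orbit_mono[OF Gplus_subset_Gaff[OF \<open>1 < R\<close>]] by blast
qed

end
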